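(* If $G$ is a tree with $|V(G)| \ge 3$, then $\det(G) = \det'(G)$.
   Context: A vertex subset $S$ of $G$ is a vertex determining set if the only automorphism of $G$ fixing every vertex of $S$ is the identity; the determining number $\det(G)$ is the minimum size of a vertex determining set. For a graph $G$ with at most one isolated vertex and no component isomorphic to $K_2$, an edge subset $T$ is an edge determining set if the only automorphism $\phi$ of $G$ satisfying $\{\phi(u),\phi(v)\}=\{u,v\}$ for all $\{u,v\}\in T$ is the identity; the determining index $\det'(G)$ is the minimum size of an edge determining set. *)

theory Defs
  imports Main
begin

definition simple_graph :: "'a set \<Rightarrow> 'a set set \<Rightarrow> bool" where
  "simple_graph V E \<longleftrightarrow> finite V \<and>
     (\<forall>e\<in>E. \<exists>u v. e = {u, v} \<and> u \<in> V \<and> v \<in> V \<and> u \<noteq> v)"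

definition connected_graph :: "'a set \<Rightarrow> 'a set set \<Rightarrow> bool" where
  "connected_graph V E \<longleftrightarrow>
     (\<forall>u\<in>V. \<forall>v\<in>V. (u, v) \<in> {(x, y). {x, y} \<in> E}\<^sup>*)"

definition is_cycle :: "'a set \<Rightarrow> 'a set set \<Rightarrow> 'a list \<Rightarrow> bool" where
  "is_cycle V E xs \<longleftrightarrow> length xs \<ge> 3 \<and> distinct xs \<and> set xs \<subseteq> V \<and>
     (\<forall>i < length xs. {xs ! i, xs ! ((i + 1) mod length xs)} \<in> E)"

definition is_tree :: "'a set \<Rightarrow> 'a set set \<Rightarrow> bool" where
  "is_tree V E \<longleftrightarrow> simple_graph V E \<and> V \<noteq> {} \<and> connected_graph V E \<and>
     \<not> (\<exists>xs. is_cycle V E xs)"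

definition automorphism :: "'a set \<Rightarrow> 'a set set \<Rightarrow> ('a \<Rightarrow> 'a) \<Rightarrow> bool" where
  "automorphism V E f \<longleftrightarrow> bij_betw f V V \<and>
     (\<forall>u\<in>V. \<forall>v\<in>V. {u, v} \<in> E \<longleftrightarrow> {f u, f v} \<in> E)"

definition vertex_determining_set :: "'a set \<Rightarrow> 'a set set \<Rightarrow> 'a set \<Rightarrow> bool" where
  "vertex_determining_set V E S \<longleftrightarrow> S \<subseteq> V \<and>
     (\<forall>f. automorphism V E f \<and> (\<forall>s\<in>S. f s = s) \<longrightarrow> (\<forall>x\<in>V. f x = x))"

definition determining_number :: "'a set \<Rightarrow> 'a set set \<Rightarrow> nat" where
  "determining_number V E = (LEAST n. \<exists>S. vertex_determining_set V E S \<and> card S = n)"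

definition edge_determining_set :: "'a set \<Rightarrow> 'a set set \<Rightarrow> 'a set set \<Rightarrow> bool" where
  "edge_determining_set V E T \<longleftrightarrow> T \<subseteq> E \<and>
     (\<forall>f. automorphism V E f \<and> (\<forall>u v. {u, v} \<in> T \<longrightarrow> {f u, f v} = {u, v})
        \<longrightarrow> (\<forall>x\<in>V. f x = x))"

definition determining_index :: "'a set \<Rightarrow> 'a set set \<Rightarrow> nat" where
  "determining_index V E = (LEAST n. \<exists>T. edge_determining_set V E T \<and> card T = n)"

end

theory Submission
  imports Defs "HOL-Library.Transitive_Closure_Table"
begin

text \<open>Deleting an edge \<open>{u, v}\<close> splits a tree into two branches; write \<open>side E u v\<close> for
  the one containing \<open>u\<close>. Automorphisms carry branches onto branches, so a vertex \<open>s\<close>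
  that is the smaller end of an incident edge cannot be moved by an automorphism fixing the
  other end, and an edge whose branches have different sizes cannot be flipped. When the tree
  has at least three vertices, every vertex \<open>s\<close> lies on an edge with unequal branches (a leaf
  has a branch of size 1, and two balanced edges at \<open>s\<close> would cover more than all vertices).
  Hence a determining set of vertices yields one of edges by attaching such an edge to each
  vertex, and a determining set of edges yields one of vertices by taking the smaller end of
  each edge; neither construction increases the size.\<close>

definition adj_avoiding :: "'a set set \<Rightarrow> 'a \<Rightarrow> 'a \<Rightarrow> 'a \<Rightarrow> 'a \<Rightarrow> bool" where
  "adj_avoiding E u v x y \<longleftrightarrow> {x, y} \<in> E \<and> {x, y} \<noteq> {u, v}"

definition side :: "'a set set \<Rightarrow> 'a \<Rightarrow> 'a \<Rightarrow> 'a set" where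
  "side E u v = {x. (adj_avoiding E u v)\<^sup>*\<^sup>* u x}"

lemma adj_avoiding_commute: "adj_avoiding E u v = adj_avoiding E v u"
  by (auto simp: adj_avoiding_def insert_commute fun_eq_iff)

lemma symp_adj_avoiding: "symp (adj_avoiding E u v)"
  by (auto simp: symp_def adj_avoiding_def insert_commute)

lemma self_in_side: "u \<in> side E u v"
  by (simp add: side_def)

lemma Least_card_le_Least_card:
  fixes P :: "'a set \<Rightarrow> bool" and Q :: "'b set \<Rightarrow> bool"
  assumes "P A" and "\<And>A. P A \<Longrightarrow> \<exists>B. Q B \<and> card B \<le> card A"
  shows "(LEAST n. \<exists>B. Q B \<and> card B = n) \<le> (LEAST n. \<exists>A. P A \<and> card A = n)"
proof -
  obtain A' where "P A'" "card A' = (LEAST n. \<exists>A. P A \<and> card A = n)"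
    using LeastI[of "\<lambda>n. \<exists>A. P A \<and> card A = n"] assms(1) by blast
  moreover obtain B where "Q B" "card B \<le> card A'"
    using assms(2) \<open>P A'\<close> by blast
  ultimately show ?thesis
    using Least_le[of "\<lambda>n. \<exists>B. Q B \<and> card B = n" "card B"] by fastforce
qed

lemma side_leaf:
  assumes "\<And>w. {s, w} \<in> E \<Longrightarrow> w = t"
  shows "side E s t = {s}"
proof -
  have "x = s" if "(adj_avoiding E s t)\<^sup>*\<^sup>* s x" for x
    using that by induction (use assms in \<open>auto simp: adj_avoiding_def\<close>)
  then show ?thesis
    using self_in_side[of s E t] by (auto simp: side_def)
qed

locale finite_simple_graph =
  fixes V :: "'a set" and E :: "'a set set"
  assumes simple_graph: "simple_graph V E"
begin

lemma finite_V: "finite V"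
  using simple_graph by (simp add: simple_graph_def)

lemma edge_endpoints:
  assumes "{x, y} \<in> E"
  shows "x \<in> V" "y \<in> V" "x \<noteq> y"
proof -
  obtain a b where "{x, y} = {a, b}" "a \<in> V" "b \<in> V" "a \<noteq> b"
    using simple_graph assms unfolding simple_graph_def by blast
  then show "x \<in> V" "y \<in> V" "x \<noteq> y"
    by (auto simp: doubleton_eq_iff)
qed

lemma edge_doubleton: "e \<in> E \<Longrightarrow> \<exists>a b. e = {a, b}"
  using simple_graph unfolding simple_graph_def by blast

lemma finite_E: "finite E"
proof -
  have "E \<subseteq> Pow V"
    using edge_doubleton edge_endpoints by blast
  then show ?thesis
    using finite_V finite_subset by blast
qed

lemma is_cycle_avoiding_path:
  assumes uv: "{u, v} \<in> E"
    and path: "rtrancl_path (adj_avoiding E u v) u ys v" and dist: "distinct (u # ys)"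
  shows "is_cycle V E (u # ys)"
proof -
  have step: "{(u # ys) ! i, ys ! i} \<in> E" if "i < length ys" for i
    using rtrancl_path_nth[OF path that] by (simp add: adj_avoiding_def)
  have "ys \<noteq> []"
    using path edge_endpoints(3)[OF uv] by (auto elim: rtrancl_path.cases)
  then have last: "ys ! (length ys - 1) = v"
    using rtrancl_path_last[OF path] by (simp add: last_conv_nth)
  have "length ys \<noteq> 1"
  proof
    assume "length ys = 1"
    then have "adj_avoiding E u v u v"
      using rtrancl_path_nth[OF path, of 0] last by simp
    then show False
      by (simp add: adj_avoiding_def)
  qed
  then have len: "length ys \<ge> 2"
    using \<open>ys \<noteq> []\<close> length_greater_0_conv[of ys] by linarith
  have "set ys \<subseteq> V"
    using step edge_endpoints(2) by (fastforce simp: in_set_conv_nth)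
  moreover have "{(u # ys) ! i, (u # ys) ! ((i + 1) mod length (u # ys))} \<in> E"
    if "i < length (u # ys)" for i
  proof (cases "i < length ys")
    case True
    then show ?thesis using step by simp
  next
    case False
    then have "i = length ys" using that by simp
    then show ?thesis
      using uv last len by (cases ys) (auto simp: insert_commute)
  qed
  ultimately show ?thesis
    using len dist edge_endpoints(1)[OF uv] by (auto simp: is_cycle_def)
qed

lemma side_subset:
  assumes "u \<in> V"
  shows "side E u v \<subseteq> V"
proof
  fix x
  assume "x \<in> side E u v"
  then have "(adj_avoiding E u v)\<^sup>*\<^sup>* u x"
    by (simp add: side_def)
  then show "x \<in> V"
    by induction (use assms edge_endpoints in \<open>auto simp: adj_avoiding_def\<close>)
qed

lemma finite_side: "u \<in> V \<Longrightarrow> finite (side E u v)"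
  using side_subset finite_V finite_subset by blast

lemma automorphism_image_side_subset:
  assumes f: "automorphism V E f" and uv: "u \<in> V" "v \<in> V"
  shows "f ` side E u v \<subseteq> side E (f u) (f v)"
proof -
  have "(adj_avoiding E (f u) (f v))\<^sup>*\<^sup>* (f u) (f x)" if "(adj_avoiding E u v)\<^sup>*\<^sup>* u x" for x
    using that
  proof induction
    case base
    then show ?case by simp
  next
    case (step y w)
    have yw: "y \<in> V" "w \<in> V"
      using step(2) edge_endpoints by (auto simp: adj_avoiding_def)
    have "inj_on f V"
      using f by (simp add: automorphism_def bij_betw_def)
    then have "{f y, f w} \<noteq> {f u, f v}"
      using step(2) yw uv by (auto simp: adj_avoiding_def doubleton_eq_iff dest: inj_onD)
    moreover have "{f y, f w} \<in> E"
      using f step(2) yw by (auto simp: automorphism_def adj_avoiding_def)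
    ultimately show ?case
      using step.IH by (auto simp: adj_avoiding_def intro: rtranclp.rtrancl_into_rtrancl)
  qed
  then show ?thesis
    by (auto simp: side_def)
qed

lemma card_side_le_automorphism:
  assumes f: "automorphism V E f" and uv: "{u, v} \<in> E"
  shows "card (side E u v) \<le> card (side E (f u) (f v))"
proof -
  have V: "u \<in> V" "v \<in> V" "f u \<in> V"
    using edge_endpoints[OF uv] f by (auto simp: automorphism_def bij_betw_def)
  have "card (side E u v) = card (f ` side E u v)"
    using f side_subset[OF V(1)]
    by (metis automorphism_def bij_betw_def card_image inj_on_subset)
  also have "\<dots> \<le> card (side E (f u) (f v))"
    using automorphism_image_side_subset[OF f V(1,2)] finite_side[OF V(3)] by (rule card_mono[rotated])
  finally show ?thesis .
qed

end

locale tree = finite_simple_graph +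
  assumes tree: "is_tree V E"
begin

lemma edge_is_bridge:
  assumes "{u, v} \<in> E"
  shows "\<not> (adj_avoiding E u v)\<^sup>*\<^sup>* u v"
proof
  assume "(adj_avoiding E u v)\<^sup>*\<^sup>* u v"
  then obtain ys where "rtrancl_path (adj_avoiding E u v) u ys v" "distinct (u # ys)"
    by (metis rtranclp_eq_rtrancl_path rtrancl_path_distinct)
  then have "is_cycle V E (u # ys)"
    using is_cycle_avoiding_path assms by blast
  then show False
    using tree unfolding is_tree_def by blast
qed

lemma side_Un_side:
  assumes uv: "{u, v} \<in> E"
  shows "side E u v \<union> side E v u = V"
proof
  show "side E u v \<union> side E v u \<subseteq> V"
    using side_subset edge_endpoints[OF uv] by blast
  show "V \<subseteq> side E u v \<union> side E v u"
  proof
    fix x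
    assume "x \<in> V"
    then have "(u, x) \<in> {(a, b). {a, b} \<in> E}\<^sup>*"
      using tree edge_endpoints[OF uv] by (auto simp: is_tree_def connected_graph_def)
    then show "x \<in> side E u v \<union> side E v u"
    proof induction
      case base
      then show ?case by (simp add: self_in_side)
    next
      case (step y z)
      show ?case
      proof (cases "{y, z} = {u, v}")
        case True
        then show ?thesis by (auto simp: doubleton_eq_iff self_in_side)
      next
        case False
        then have "adj_avoiding E u v y z"
          using step by (simp add: adj_avoiding_def)
        then show ?thesis
          using step.IH adj_avoiding_commute[of E u v]
          by (auto simp: side_def intro: rtranclp.rtrancl_into_rtrancl)
      qed
    qed
  qed
qed

lemma side_Int_side:
  assumes "{u, v} \<in> E"
  shows "side E u v \<inter> side E v u = {}"
proof (rule ccontr)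
  assume "side E u v \<inter> side E v u \<noteq> {}"
  then obtain x where "(adj_avoiding E u v)\<^sup>*\<^sup>* u x" "(adj_avoiding E u v)\<^sup>*\<^sup>* v x"
    using adj_avoiding_commute[of E u v] by (auto simp: side_def)
  then have "(adj_avoiding E u v)\<^sup>*\<^sup>* u v"
    using sympD[OF symp_rtranclp[OF symp_adj_avoiding]] by (metis rtranclp_trans)
  then show False
    using edge_is_bridge[OF assms] by blast
qed

lemma card_side_add_card_side:
  assumes uv: "{u, v} \<in> E"
  shows "card (side E u v) + card (side E v u) = card V"
  using card_Un_disjoint[OF finite_side finite_side side_Int_side[OF uv]]
    side_Un_side[OF uv] edge_endpoints[OF uv] by simp

text \<open>The two inequalities for the edge and its reverse are forced to be equalities, since both
  pairs of branch sizes add up to \<open>card V\<close>.\<close>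

lemma card_side_automorphism:
  assumes f: "automorphism V E f" and uv: "{u, v} \<in> E"
  shows "card (side E (f u) (f v)) = card (side E u v)"
proof -
  have vu: "{v, u} \<in> E"
    using uv by (simp add: insert_commute)
  have "{f u, f v} \<in> E"
    using f uv edge_endpoints[OF uv] by (simp add: automorphism_def)
  then show ?thesis
    using card_side_le_automorphism[OF f uv] card_side_le_automorphism[OF f vu]
      card_side_add_card_side[OF uv] card_side_add_card_side[of "f u" "f v"] by linarith
qed

lemma side_neighbour_subset:
  assumes uv: "{u, v} \<in> E" and uw: "{u, w} \<in> E" and "v \<noteq> w"
  shows "side E w u \<subset> side E u v"
proof -
  have wu: "{w, u} \<in> E"
    using uw by (simp add: insert_commute)
  have u_notin: "u \<notin> side E w u"
    using edge_is_bridge[OF wu] by (simp add: side_def)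
  have "(adj_avoiding E u v)\<^sup>*\<^sup>* u x" if "(adj_avoiding E w u)\<^sup>*\<^sup>* w x" for x
    using that
  proof induction
    case base
    have "{u, w} \<noteq> {u, v}"
      using \<open>v \<noteq> w\<close> edge_endpoints[OF uv] by (auto simp: doubleton_eq_iff)
    then have "adj_avoiding E u v u w"
      using uw by (simp add: adj_avoiding_def)
    then show ?case
      by (rule r_into_rtranclp)
  next
    case (step y z)
    then have "y \<noteq> u" "z \<noteq> u"
      using u_notin by (auto simp: side_def intro: rtranclp.rtrancl_into_rtrancl)
    then have "adj_avoiding E u v y z"
      using step(2) by (auto simp: adj_avoiding_def doubleton_eq_iff)
    then show ?case
      using step.IH by (rule rtranclp.rtrancl_into_rtrancl[rotated])
  qed
  then show ?thesis
    using u_notin self_in_side[of u E v] by (auto simp: side_def)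
qed

lemma card_side_less_if_moves_neighbour:
  assumes f: "automorphism V E f" and uv: "{u, v} \<in> E" and "f u = u" "f v \<noteq> v"
  shows "card (side E v u) < card (side E u v)"
proof -
  have vu: "{v, u} \<in> E"
    using uv by (simp add: insert_commute)
  have "{u, f v} \<in> E"
    using f uv edge_endpoints[OF uv] \<open>f u = u\<close> by (auto simp: automorphism_def)
  then have "card (side E (f v) u) < card (side E u v)"
    using side_neighbour_subset[OF uv] \<open>f v \<noteq> v\<close> finite_side edge_endpoints[OF uv]
    by (metis psubset_card_mono)
  then show ?thesis
    using card_side_automorphism[OF f vu] \<open>f u = u\<close> by simp
qed

lemma card_side_add_card_side_less:
  assumes "{s, t1} \<in> E" "{s, t2} \<in> E" "t1 \<noteq> t2"
  shows "card (side E t1 s) + card (side E t2 s) < card V"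
proof -
  have "side E t2 s \<subset> side E s t1"
    using side_neighbour_subset assms by blast
  then have "side E t1 s \<inter> side E t2 s = {}"
    using side_Int_side[of s t1] assms(1) by blast
  moreover have "side E t1 s \<union> side E t2 s \<subset> V"
    using side_Un_side[OF assms(1)] \<open>side E t2 s \<subset> side E s t1\<close> side_Int_side[OF assms(1)]
      self_in_side[of s E t1] by blast
  ultimately show ?thesis
    using finite_side edge_endpoints assms finite_V
    by (metis card_Un_disjoint psubset_card_mono)
qed

lemma ex_neighbour:
  assumes "s \<in> V" and "card V \<ge> 2"
  shows "\<exists>t. {s, t} \<in> E"
proof -
  obtain w where w: "w \<in> V" "w \<noteq> s"
    using assms by (metis card_le_Suc0_iff_eq finite_V not_less_eq_eq numeral_2_eq_2)
  then have "(s, w) \<in> {(a, b). {a, b} \<in> E}\<^sup>*"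
    using tree assms(1) by (auto simp: is_tree_def connected_graph_def)
  then show ?thesis
    using w(2) by (cases rule: converse_rtranclE) auto
qed

lemma ex_unbalanced_edge:
  assumes "s \<in> V" and "card V \<ge> 3"
  shows "\<exists>t. {s, t} \<in> E \<and> card (side E s t) \<noteq> card (side E t s)"
proof (rule ccontr)
  assume balanced: "\<not> ?thesis"
  obtain t1 where t1: "{s, t1} \<in> E"
    using ex_neighbour assms by fastforce
  show False
  proof (cases "\<exists>t2. t2 \<noteq> t1 \<and> {s, t2} \<in> E")
    case True
    then obtain t2 where "t2 \<noteq> t1" "{s, t2} \<in> E"
      by blast
    then have "card (side E t1 s) + card (side E t2 s) < card V"
      using card_side_add_card_side_less[OF t1] by blast
    moreover have "card (side E s t1) = card (side E t1 s)" "card (side E s t2) = card (side E t2 s)"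
      using balanced t1 \<open>{s, t2} \<in> E\<close> by blast+
    ultimately show False
      using card_side_add_card_side[OF t1] card_side_add_card_side[OF \<open>{s, t2} \<in> E\<close>] by linarith
  next
    case False
    then have "side E s t1 = {s}"
      by (intro side_leaf) blast
    then show False
      using balanced t1 card_side_add_card_side[OF t1] assms(2) by fastforce
  qed
qed

lemma ex_edge_determining_set_card_le:
  assumes S: "vertex_determining_set V E S" and "card V \<ge> 3"
  shows "\<exists>T. edge_determining_set V E T \<and> card T \<le> card S"
proof -
  have SV: "S \<subseteq> V"
    using S by (simp add: vertex_determining_set_def)
  obtain g where g: "\<And>s. s \<in> S \<Longrightarrow> {s, g s} \<in> E \<and> card (side E s (g s)) \<noteq> card (side E (g s) s)"
    using ex_unbalanced_edge SV assms(2) by (metis subsetD)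
  define T where "T = (\<lambda>s. {s, g s}) ` S"
  have "f s = s" if f: "automorphism V E f" and fixing: "\<forall>u v. {u, v} \<in> T \<longrightarrow> {f u, f v} = {u, v}"
    and "s \<in> S" for f s
  proof (rule ccontr)
    assume "f s \<noteq> s"
    moreover have "{f s, f (g s)} = {s, g s}"
      using fixing \<open>s \<in> S\<close> by (auto simp: T_def)
    ultimately have "f s = g s" "f (g s) = s"
      by (auto simp: doubleton_eq_iff)
    then show False
      using card_side_automorphism[OF f] g[OF \<open>s \<in> S\<close>] by metis
  qed
  then have "edge_determining_set V E T"
    using S g by (auto simp: edge_determining_set_def vertex_determining_set_def T_def)
  moreover have "card T \<le> card S"
    unfolding T_def using SV finite_V by (intro card_image_le) (rule finite_subset)
  ultimately show ?thesis
    by blast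
qed

lemma ex_vertex_determining_set_card_le:
  assumes T: "edge_determining_set V E T"
  shows "\<exists>S. vertex_determining_set V E S \<and> card S \<le> card T"
proof -
  have TE: "T \<subseteq> E"
    using T by (simp add: edge_determining_set_def)
  have "\<exists>u v. {u, v} = e \<and> card (side E u v) \<le> card (side E v u)" if "e \<in> T" for e
    using edge_doubleton[of e] TE that by (metis insert_commute nat_le_linear subsetD)
  then obtain h where h: "\<And>e. e \<in> T \<Longrightarrow>
      \<exists>v. {h e, v} = e \<and> card (side E (h e) v) \<le> card (side E v (h e))"
    by metis
  define S where "S = h ` T"
  have edge_fixed: "f ` e = e" if f: "automorphism V E f" and fixing: "\<forall>s\<in>S. f s = s"
    and "e \<in> T" for f e
  proof -
    obtain v where v: "{h e, v} = e"
      and smaller: "card (side E (h e) v) \<le> card (side E v (h e))"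
      using h[OF \<open>e \<in> T\<close>] by blast
    have fixed: "f (h e) = h e"
      using fixing \<open>e \<in> T\<close> by (simp add: S_def)
    have "{h e, v} \<in> E"
      using v \<open>e \<in> T\<close> TE by auto
    have "f v = v"
    proof (rule ccontr)
      assume "f v \<noteq> v"
      then show False
        using card_side_less_if_moves_neighbour[OF f \<open>{h e, v} \<in> E\<close> fixed] smaller
        by linarith
    qed
    then have "f ` {h e, v} = {h e, v}"
      using fixed by simp
    then show ?thesis
      using v by simp
  qed
  have "vertex_determining_set V E S"
    unfolding vertex_determining_set_def
  proof (intro conjI allI impI)
    show "S \<subseteq> V"
    proof
      fix s
      assume "s \<in> S"
      then obtain e v where "e \<in> T" "{s, v} = e"
        using h unfolding S_def by blast
      then show "s \<in> V"
        using TE edge_endpoints(1) by blast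
    qed
    fix f
    assume f: "automorphism V E f \<and> (\<forall>s\<in>S. f s = s)"
    then have "{f u, f v} = {u, v}" if "{u, v} \<in> T" for u v
      using edge_fixed[OF _ _ that] by simp
    then show "\<forall>x\<in>V. f x = x"
      using T f unfolding edge_determining_set_def by blast
  qed
  moreover have "card S \<le> card T"
    unfolding S_def using TE finite_E by (intro card_image_le) (rule finite_subset)
  ultimately show ?thesis
    by blast
qed

end

theorem theorem10:
  fixes V :: "'a set" and E :: "'a set set"
  assumes "is_tree V E" and "card V \<ge> 3"
  shows "determining_number V E = determining_index V E"
proof -
  interpret tree V E
    using assms(1) by unfold_locales (simp_all add: is_tree_def)
  have V: "vertex_determining_set V E V"
    by (simp add: vertex_determining_set_def)
  then obtain T where T: "edge_determining_set V E T"
    using ex_edge_determining_set_card_le assms(2) by blast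
  have "determining_index V E \<le> determining_number V E"
    unfolding determining_index_def determining_number_def
    using V ex_edge_determining_set_card_le[OF _ assms(2)] by (rule Least_card_le_Least_card)
  moreover have "determining_number V E \<le> determining_index V E"
    unfolding determining_index_def determining_number_def
    using T ex_vertex_determining_set_card_le by (rule Least_card_le_Least_card)
  ultimately show ?thesis
    by simp
qed

end
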